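(* Let $k\ge2$ be an integer and let $\alpha,\beta\in\mathbb{C}$ satisfy $|\alpha|^k<|\beta|\le|\alpha|^{k-1}$. Consider the automorphisms of $\mathbb{C}^2$ \[ F(z_1,z_2)=(\alpha z_1+z_2^2,\ \beta z_2),\qquad G(z_1,z_2)=(\beta z_1,\ \alpha z_2+z_1^k). \] Let $\{F_n\}_{n\ge1}$ be any sequence in which each $F_n$ is either $F$ or $G$. Then the non-autonomous basin of attraction of $\{F_n\}$ at the origin, \[ \{z\in\mathbb{C}^2: F_n\circ F_{n-1}\circ\cdots\circ F_1(z)\to0 \text{ as } n\to\infty\}, \] is biholomorphic to $\mathbb{C}^2$. *)

theory Defs
  imports "HOL-Analysis.Analysis"
begin

definition cscale2 :: "complex \<Rightarrow> complex \<times> complex \<Rightarrow> complex \<times> complex" where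
  "cscale2 c w = (c * fst w, c * snd w)"

text \<open>Holomorphic map C^2 -> C^2 on a set U: at every point of U it is (real) Frechet
 differentiable with complex-linear derivative.\<close>
definition holomorphic2_on ::
  "(complex \<times> complex \<Rightarrow> complex \<times> complex) \<Rightarrow> (complex \<times> complex) set \<Rightarrow> bool" where
  "holomorphic2_on f U \<longleftrightarrow>
     (\<forall>z\<in>U. \<exists>D. (f has_derivative D) (at z) \<and> (\<forall>c w. D (cscale2 c w) = cscale2 c (D w)))"

definition biholomorphic_to_C2 :: "(complex \<times> complex) set \<Rightarrow> bool" where
  "biholomorphic_to_C2 \<Omega> \<longleftrightarrow> open \<Omega> \<and>
     (\<exists>\<Phi>. bij_betw \<Phi> \<Omega> UNIV \<and> holomorphic2_on \<Phi> \<Omega> \<and> holomorphic2_on (inv_into \<Omega> \<Phi>) UNIV)"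

text \<open>Forward compositions F_n o ... o F_1 (sequence indexed from 1; comp_seq fs 0 = id).\<close>
fun comp_seq :: "(nat \<Rightarrow> ('a \<Rightarrow> 'a)) \<Rightarrow> nat \<Rightarrow> 'a \<Rightarrow> 'a" where
  "comp_seq fs 0 = id"
| "comp_seq fs (Suc n) = fs (Suc n) \<circ> comp_seq fs n"

definition nonaut_basin :: "(nat \<Rightarrow> (complex \<times> complex \<Rightarrow> complex \<times> complex)) \<Rightarrow> (complex \<times> complex) set" where
  "nonaut_basin fs = {z. (\<lambda>n. comp_seq fs n z) \<longlonglongrightarrow> 0}"

end

theory Submission
  imports Defs
begin

text \<open>Write \<open>N\<^sub>X(w) = (a w\<^sub>1 + c w\<^sub>2\<^sup>2, b w\<^sub>2)\<close> for \<open>X = (a, b, c)\<close>.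
  Then \<open>F \<circ> N\<^sub>X\<close> is again a normal form \<open>N\<^sub>X\<^sub>'\<close>, while \<open>G \<circ> N\<^sub>X = N\<^sub>X\<^sub>' \<circ> P\<^sub>X\<close>
  with an explicit correction \<open>P\<^sub>X\<close> tangent to the identity at 0, so that
  \<open>F\<^sub>n \<circ> \<dots> \<circ> F\<^sub>1 = N\<^sub>X\<^sub>n \<circ> P\<^sub>n \<circ> \<dots> \<circ> P\<^sub>1\<close>. The hypothesis
  \<open>|\<alpha>|\<^sup>k < |\<beta>| \<le> |\<alpha>|\<^sup>k\<^sup>-\<^sup>1\<close> makes a weighted size of \<open>X\<^sub>n\<close> decay geometrically,
  which bounds the distance of \<open>P\<^sub>n\<close> from the identity on a fixed small ball by a summable
  sequence. Hence \<open>P\<^sub>n \<circ> \<dots> \<circ> P\<^sub>1\<close> converges on that ball to a holomorphic map whose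
  derivative is close to the identity; it is injective and, by Brouwer's theorem, covers a
  neighbourhood of 0. Since moreover \<open>N\<^sub>X\<^sub>n \<longrightarrow> 0\<close>, a point lies in the basin iff its
  orbit eventually enters the ball, and \<open>\<Phi> = lim N\<^sub>X\<^sub>n\<^sup>-\<^sup>1 \<circ> F\<^sub>n \<circ> \<dots> \<circ> F\<^sub>1\<close>
  maps the basin biholomorphically onto \<open>\<complex>\<^sup>2\<close>.\<close>

definition cscale2_homogeneous :: "(complex \<times> complex \<Rightarrow> complex \<times> complex) \<Rightarrow> bool" where
  "cscale2_homogeneous D \<longleftrightarrow> (\<forall>c w. D (cscale2 c w) = cscale2 c (D w))"

lemma cscale2_homogeneous_id: "cscale2_homogeneous id"
  by (simp add: cscale2_homogeneous_def)

lemma cscale2_homogeneous_comp: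
  "cscale2_homogeneous f \<Longrightarrow> cscale2_homogeneous g \<Longrightarrow> cscale2_homogeneous (f \<circ> g)"
  unfolding cscale2_homogeneous_def comp_def by metis

lemma cscale2_homogeneous_tendsto:
  assumes "\<And>h. (\<lambda>n. D n h) \<longlonglongrightarrow> L h" and "\<And>n. cscale2_homogeneous (D n)"
  shows "cscale2_homogeneous L"
  unfolding cscale2_homogeneous_def
proof (intro allI)
  fix c w
  have "(\<lambda>n. D n (cscale2 c w)) = (\<lambda>n. cscale2 c (D n w))"
    using assms(2) unfolding cscale2_homogeneous_def by metis
  moreover have "(\<lambda>n. cscale2 c (D n w)) \<longlonglongrightarrow> cscale2 c (L w)"
    unfolding cscale2_def by (intro tendsto_intros assms(1))
  ultimately show "L (cscale2 c w) = cscale2 c (L w)"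
    using assms(1) LIMSEQ_unique by metis
qed

lemma cscale2_homogeneous_inv:
  assumes "bij D" and "cscale2_homogeneous D"
  shows "cscale2_homogeneous (inv D)"
  unfolding cscale2_homogeneous_def
proof (intro allI)
  fix c w
  have "D (cscale2 c (inv D w)) = cscale2 c (D (inv D w))"
    using assms(2) unfolding cscale2_homogeneous_def by metis
  also have "\<dots> = D (inv D (cscale2 c w))"
    using assms(1) by (simp add: bij_is_surj surj_f_inv_f)
  finally show "inv D (cscale2 c w) = cscale2 c (inv D w)"
    using assms(1) by (metis bij_is_inj injD)
qed

lemma holomorphic2_on_iff:
  "holomorphic2_on f U \<longleftrightarrow> (\<forall>z\<in>U. \<exists>D. (f has_derivative D) (at z) \<and> cscale2_homogeneous D)"
  by (simp add: holomorphic2_on_def cscale2_homogeneous_def)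

lemma biholomorphic_to_C2I:
  assumes "open \<Omega>" and bij: "bij_betw \<Phi> \<Omega> UNIV"
    and deriv: "\<And>z. z \<in> \<Omega> \<Longrightarrow> \<exists>D. (\<Phi> has_derivative D) (at z) \<and> cscale2_homogeneous D \<and> inj D"
  shows "biholomorphic_to_C2 \<Omega>"
proof -
  have "holomorphic2_on \<Phi> \<Omega>"
    unfolding holomorphic2_on_iff using deriv by blast
  moreover have "holomorphic2_on (inv_into \<Omega> \<Phi>) UNIV"
    unfolding holomorphic2_on_iff
  proof
    fix y :: "complex \<times> complex"
    define z where "z = inv_into \<Omega> \<Phi> y"
    have z: "z \<in> \<Omega>" "\<Phi> z = y"
      using bij by (auto simp: z_def bij_betw_def inv_into_into f_inv_into_f)
    obtain D where D: "(\<Phi> has_derivative D) (at z)" "cscale2_homogeneous D" "inj D"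
      using deriv[OF z(1)] by blast
    have "linear D" using D(1) by (rule has_derivative_linear)
    then have "bij D" using D(3) by (simp add: bij_def linear_injective_imp_surjective)
    have cont: "continuous_on \<Omega> \<Phi>"
      using deriv by (meson continuous_at_imp_continuous_on has_derivative_continuous)
    have "(inv_into \<Omega> \<Phi> has_derivative inv D) (at (\<Phi> z))"
    proof (rule has_derivative_inverse_strong[OF \<open>open \<Omega>\<close> z(1) cont _ D(1)])
      show "\<And>x. x \<in> \<Omega> \<Longrightarrow> inv_into \<Omega> \<Phi> (\<Phi> x) = x"
        using bij by (simp add: bij_betw_def inv_into_f_f)
      show "D \<circ> inv D = id"
        using \<open>bij D\<close> by (metis bij_is_surj surj_iff)
    qed
    then show "\<exists>D. (inv_into \<Omega> \<Phi> has_derivative D) (at y) \<and> cscale2_homogeneous D"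
      using cscale2_homogeneous_inv[OF \<open>bij D\<close> D(2)] z(2) by blast
  qed
  ultimately show ?thesis
    using assms(1,2) unfolding biholomorphic_to_C2_def by blast
qed

lemma tendsto_lim_telescoping:
  fixes X :: "nat \<Rightarrow> 'a::banach"
  assumes step: "\<And>n. norm (X (Suc n) - X n) \<le> d n" and d: "summable d"
  shows "X \<longlonglongrightarrow> lim X" and "norm (lim X - X n) \<le> (\<Sum>i. d (i + n))"
proof -
  define D where "D i = X (Suc i) - X i" for i
  have D: "summable D"
    by (rule summable_comparison_test[OF _ d]) (use step in \<open>auto simp: D_def\<close>)
  have partial: "X 0 + (\<Sum>i<n. D i) = X n" for n
    by (simp add: D_def sum_lessThan_telescope)
  have "(\<lambda>n. X 0 + (\<Sum>i<n. D i)) \<longlonglongrightarrow> X 0 + suminf D"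
    by (intro tendsto_add tendsto_const summable_LIMSEQ D)
  then have conv: "X \<longlonglongrightarrow> X 0 + suminf D" by (simp only: partial)
  then have lim: "lim X = X 0 + suminf D" by (rule limI)
  with conv show "X \<longlonglongrightarrow> lim X" by simp
  have "lim X - X n = (\<Sum>i. D (i + n))"
    using lim partial[of n] suminf_split_initial_segment[OF D, of n] by simp
  also have "norm \<dots> \<le> (\<Sum>i. d (i + n))"
    by (rule norm_suminf_le) (use step d in \<open>auto simp: D_def summable_iff_shift\<close>)
  finally show "norm (lim X - X n) \<le> (\<Sum>i. d (i + n))" .
qed

lemma inj_on_half_lipschitz_perturbation:
  fixes g :: "'a::real_normed_vector \<Rightarrow> 'a"
  assumes "\<And>x y. x \<in> S \<Longrightarrow> y \<in> S \<Longrightarrow> norm ((g x - x) - (g y - y)) \<le> 1/2 * norm (x - y)"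
  shows "inj_on g S"
proof (rule inj_onI)
  fix x y assume "x \<in> S" "y \<in> S" "g x = g y"
  then have "norm (x - y) \<le> 1/2 * norm (x - y)"
    using assms[of x y] by (simp add: norm_minus_commute)
  then show "x = y" by simp
qed

lemma inj_linear_near_id:
  assumes "linear L" and "\<And>h. norm (L h - h) \<le> 1/2 * norm h"
  shows "inj L"
proof (rule inj_on_half_lipschitz_perturbation)
  fix x y
  have "(L x - x) - (L y - y) = L (x - y) - (x - y)"
    using linear_diff[OF assms(1), of x y] by (simp add: algebra_simps)
  show "norm ((L x - x) - (L y - y)) \<le> 1/2 * norm (x - y)"
    unfolding \<open>(L x - x) - (L y - y) = L (x - y) - (x - y)\<close> by (rule assms(2))
qed

lemma half_lipschitz_perturbation_surj:
  fixes g :: "'a::euclidean_space \<Rightarrow> 'a"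
  assumes r: "r > 0" and cont: "continuous_on (ball 0 r) g" and g0: "g 0 = 0"
    and lip: "\<And>x y. x \<in> ball 0 r \<Longrightarrow> y \<in> ball 0 r \<Longrightarrow>
        norm ((g x - x) - (g y - y)) \<le> 1/2 * norm (x - y)"
    and y: "norm y < r/4"
  shows "\<exists>x\<in>ball 0 r. g x = y"
proof -
  have sub: "cball 0 (r/2) \<subseteq> ball 0 r" using r by auto
  have cont': "continuous_on (cball 0 (r/2)) (\<lambda>x. y - (g x - x))"
    using continuous_on_subset[OF cont sub] by (intro continuous_intros)
  have maps: "(\<lambda>x. y - (g x - x)) \<in> cball 0 (r/2) \<rightarrow> cball 0 (r/2)"
  proof
    fix x :: 'a assume x: "x \<in> cball 0 (r/2)"
    have "norm (g x - x) \<le> 1/2 * norm x"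
      using lip[of x 0] sub x r g0 by auto
    then show "y - (g x - x) \<in> cball 0 (r/2)"
      using norm_triangle_ineq4[of y "g x - x"] y x by auto
  qed
  obtain x where "x \<in> cball 0 (r/2)" "y - (g x - x) = x"
    using brouwer_ball[OF _ cont' maps] r by auto
  then show ?thesis using r by (intro bexI[of _ x]) (auto simp: algebra_simps)
qed

fun comp_seq_deriv :: "(nat \<Rightarrow> 'a \<Rightarrow> 'a \<Rightarrow> 'a) \<Rightarrow> (nat \<Rightarrow> 'a \<Rightarrow> 'a) \<Rightarrow> nat \<Rightarrow> 'a \<Rightarrow> 'a \<Rightarrow> 'a" where
  "comp_seq_deriv DP P 0 x = id"
| "comp_seq_deriv DP P (Suc n) x = DP n (comp_seq P n x) \<circ> comp_seq_deriv DP P n x"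

lemma comp_seq_add: "comp_seq f (m + n) x = comp_seq (\<lambda>j. f (m + j)) n (comp_seq f m x)"
  by (induction n) auto

lemma cscale2_homogeneous_comp_seq_deriv:
  assumes "\<And>n w. cscale2_homogeneous (DP n w)"
  shows "cscale2_homogeneous (comp_seq_deriv DP P n x)"
proof (induction n)
  case 0 show ?case unfolding comp_seq_deriv.simps by (rule cscale2_homogeneous_id)
next
  case (Suc n) show ?case unfolding comp_seq_deriv.simps by (rule cscale2_homogeneous_comp[OF assms Suc])
qed

text \<open>Indexing: \<open>DP n\<close> and \<open>\<delta> n\<close> belong to the map \<open>P (Suc n)\<close>.\<close>
locale near_identity_sequence =
  fixes R :: real and P :: "nat \<Rightarrow> 'a::euclidean_space \<Rightarrow> 'a"
    and DP :: "nat \<Rightarrow> 'a \<Rightarrow> 'a \<Rightarrow> 'a" and \<delta> :: "nat \<Rightarrow> real"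
  assumes R_pos: "R > 0"
    and map_zero: "\<And>n. P (Suc n) 0 = 0"
    and map_has_derivative: "\<And>n w. norm w \<le> R \<Longrightarrow> (P (Suc n) has_derivative DP n w) (at w)"
    and deriv_near_id: "\<And>n w h. norm w \<le> R \<Longrightarrow> norm (DP n w h - h) \<le> \<delta> n * norm h"
    and \<delta>_nonneg: "\<And>n. \<delta> n \<ge> 0" and \<delta>_summable: "summable \<delta>" and \<delta>_suminf: "suminf \<delta> \<le> 1/4"
begin

definition limit_map :: "'a \<Rightarrow> 'a" where
  "limit_map x = lim (\<lambda>n. comp_seq P n x)"

definition limit_deriv :: "'a \<Rightarrow> 'a \<Rightarrow> 'a" where
  "limit_deriv x h = lim (\<lambda>n. comp_seq_deriv DP P n x h)"

lemma partial_sum_le: "sum \<delta> {..<n} \<le> 1/4"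
  using sum_le_suminf[OF \<delta>_summable, of "{..<n}"] \<delta>_nonneg \<delta>_suminf by auto

lemma tail_tendsto_zero: "(\<lambda>n. \<Sum>i. \<delta> (i + n)) \<longlonglongrightarrow> 0"
  using tendsto_diff[OF tendsto_const[of "suminf \<delta>"] summable_LIMSEQ[OF \<delta>_summable]]
  by (simp add: suminf_minus_initial_segment[OF \<delta>_summable])

lemma norm_le_of_close:
  fixes u v :: 'a
  assumes "norm (u - v) \<le> 2 * sum \<delta> {..<n} * norm v"
  shows "norm u \<le> 3/2 * norm v"
proof -
  have "2 * sum \<delta> {..<n} * norm v \<le> 1/2 * norm v"
    using partial_sum_le[of n] by (intro mult_right_mono) auto
  then show ?thesis using assms norm_triangle_sub[of u v] by linarith
qed

lemma map_lipschitz: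
  assumes "norm w \<le> R" "norm w' \<le> R"
  shows "norm ((P (Suc n) w - w) - (P (Suc n) w' - w')) \<le> \<delta> n * norm (w - w')"
proof (rule differentiable_bound[where f="\<lambda>w. P (Suc n) w - w" and S="cball 0 R"])
  show "((\<lambda>w. P (Suc n) w - w) has_derivative (\<lambda>h. DP n x h - h)) (at x within cball 0 R)"
    if "x \<in> cball 0 R" for x
    using that
    by (intro has_derivative_diff[OF has_derivative_at_withinI has_derivative_ident] map_has_derivative)
      simp
  show "onorm (\<lambda>h. DP n x h - h) \<le> \<delta> n" if "x \<in> cball 0 R" for x
    using that deriv_near_id by (intro onorm_le) auto
qed (use assms in auto)

lemma orbit_displacement:
  assumes "norm x \<le> R/2"
  shows "norm (comp_seq P n x - x) \<le> 2 * sum \<delta> {..<n} * norm x"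
proof (induction n)
  case (Suc n)
  let ?w = "comp_seq P n x"
  have w: "norm ?w \<le> 3/2 * norm x" using Suc by (rule norm_le_of_close)
  then have "norm ?w \<le> R" using assms R_pos by linarith
  have "norm (comp_seq P (Suc n) x - x) \<le> norm (P (Suc n) ?w - ?w) + norm (?w - x)"
    using norm_triangle_ineq[of "P (Suc n) ?w - ?w" "?w - x"] by simp
  also have "\<dots> \<le> \<delta> n * (3/2 * norm x) + 2 * sum \<delta> {..<n} * norm x"
    using map_lipschitz[OF \<open>norm ?w \<le> R\<close>, of 0 n] R_pos map_zero w \<delta>_nonneg[of n] Suc
    by (intro add_mono order_trans[OF _ mult_left_mono[OF w]]) auto
  also have "\<dots> \<le> 2 * sum \<delta> {..<Suc n} * norm x"
    using \<delta>_nonneg[of n] by (simp add: algebra_simps)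
  finally show ?case .
qed simp

lemma orbit_bound: "norm x \<le> R/2 \<Longrightarrow> norm (comp_seq P n x) \<le> 3/2 * norm x"
  by (rule norm_le_of_close[OF orbit_displacement])

lemma orbit_in_domain: "norm x < R/2 \<Longrightarrow> norm (comp_seq P n x) \<le> R"
  using orbit_bound[of x n] R_pos by linarith

lemma comp_seq_has_derivative:
  assumes "norm x < R/2"
  shows "(comp_seq P n has_derivative comp_seq_deriv DP P n x) (at x)"
proof (induction n)
  case (Suc n)
  have "((\<lambda>y. P (Suc n) (comp_seq P n y)) has_derivative
      (\<lambda>h. DP n (comp_seq P n x) (comp_seq_deriv DP P n x h))) (at x)"
    using Suc map_has_derivative[OF orbit_in_domain[OF assms]] by (rule has_derivative_compose)
  then show ?case by (simp add: o_def)
qed (simp add: id_def)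

lemma comp_seq_deriv_near_id:
  assumes "norm x < R/2"
  shows "norm (comp_seq_deriv DP P n x h - h) \<le> 2 * sum \<delta> {..<n} * norm h"
proof (induction n)
  case (Suc n)
  let ?u = "comp_seq_deriv DP P n x h"
  have u: "norm ?u \<le> 3/2 * norm h" using Suc by (rule norm_le_of_close)
  have "norm (comp_seq_deriv DP P (Suc n) x h - h)
      \<le> norm (DP n (comp_seq P n x) ?u - ?u) + norm (?u - h)"
    using norm_triangle_ineq[of "DP n (comp_seq P n x) ?u - ?u" "?u - h"] by simp
  also have "\<dots> \<le> \<delta> n * (3/2 * norm h) + 2 * sum \<delta> {..<n} * norm h"
    using deriv_near_id[OF orbit_in_domain[OF assms], where n=n and h="?u"] u \<delta>_nonneg[of n] Suc
    by (intro add_mono order_trans[OF _ mult_left_mono[OF u]]) auto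
  also have "\<dots> \<le> 2 * sum \<delta> {..<Suc n} * norm h"
    using \<delta>_nonneg[of n] by (simp add: algebra_simps)
  finally show ?case .
qed simp

lemma comp_seq_deriv_step:
  assumes "norm x < R/2"
  shows "norm (comp_seq_deriv DP P (Suc n) x h - comp_seq_deriv DP P n x h) \<le> 2 * norm h * \<delta> n"
proof -
  let ?u = "comp_seq_deriv DP P n x h"
  have "norm (DP n (comp_seq P n x) ?u - ?u) \<le> \<delta> n * norm ?u"
    by (rule deriv_near_id[OF orbit_in_domain[OF assms]])
  also have "\<dots> \<le> \<delta> n * (2 * norm h)"
  proof (rule mult_left_mono)
    have "norm ?u \<le> 3/2 * norm h"
      by (rule norm_le_of_close[OF comp_seq_deriv_near_id[OF assms]])
    then show "norm ?u \<le> 2 * norm h" using norm_ge_zero[of h] by linarith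
  qed (rule \<delta>_nonneg)
  finally show ?thesis by (simp add: algebra_simps)
qed

lemma comp_seq_deriv_tendsto:
  assumes "norm x < R/2"
  shows "(\<lambda>n. comp_seq_deriv DP P n x h) \<longlonglongrightarrow> limit_deriv x h"
    and "norm (limit_deriv x h - comp_seq_deriv DP P n x h) \<le> 2 * norm h * (\<Sum>i. \<delta> (i + n))"
proof -
  have step: "\<And>n. norm (comp_seq_deriv DP P (Suc n) x h - comp_seq_deriv DP P n x h) \<le> 2 * norm h * \<delta> n"
    by (rule comp_seq_deriv_step[OF assms])
  have sum: "summable (\<lambda>n. 2 * norm h * \<delta> n)" by (intro summable_mult \<delta>_summable)
  show "(\<lambda>n. comp_seq_deriv DP P n x h) \<longlonglongrightarrow> limit_deriv x h"
    unfolding limit_deriv_def by (rule tendsto_lim_telescoping(1)[OF step sum])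
  show "norm (limit_deriv x h - comp_seq_deriv DP P n x h) \<le> 2 * norm h * (\<Sum>i. \<delta> (i + n))"
    using tendsto_lim_telescoping(2)[OF step sum, of n]
      suminf_mult[OF summable_ignore_initial_segment[OF \<delta>_summable, of n], of "2 * norm h"]
    by (simp add: limit_deriv_def)
qed

lemma comp_seq_deriv_uniform:
  assumes "e > 0"
  shows "\<forall>\<^sub>F n in sequentially. \<forall>x\<in>ball 0 (R/2). \<forall>h.
    norm (comp_seq_deriv DP P n x h - limit_deriv x h) \<le> e * norm h"
proof -
  have "\<forall>\<^sub>F n in sequentially. (\<Sum>i. \<delta> (i + n)) < e/2"
    using tail_tendsto_zero assms by (intro order_tendstoD) auto
  then show ?thesis
  proof (rule eventually_mono, intro ballI allI)
    fix n x h assume n: "(\<Sum>i. \<delta> (i + n)) < e/2" and "x \<in> ball (0::'a) (R/2)"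
    then have "norm (limit_deriv x h - comp_seq_deriv DP P n x h) \<le> 2 * norm h * (\<Sum>i. \<delta> (i + n))"
      by (intro comp_seq_deriv_tendsto(2)) simp
    also have "\<dots> \<le> e * norm h"
      using mult_right_mono[of "2 * (\<Sum>i. \<delta> (i + n))" e "norm h"] n by (simp add: algebra_simps)
    finally show "norm (comp_seq_deriv DP P n x h - limit_deriv x h) \<le> e * norm h"
      by (simp add: norm_minus_commute)
  qed
qed

lemma comp_seq_zero: "comp_seq P n 0 = 0"
  by (induction n) (simp_all add: map_zero)

lemma limit_map_converges:
  assumes x: "x \<in> ball 0 (R/2)"
  shows "(\<lambda>n. comp_seq P n x) \<longlonglongrightarrow> limit_map x"
    and "(limit_map has_derivative limit_deriv x) (at x)"
proof -
  have zero: "(0::'a) \<in> ball 0 (R/2)" "(\<lambda>n. comp_seq P n 0) \<longlonglongrightarrow> 0"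
    using R_pos by (simp_all add: comp_seq_zero)
  have derivs: "(comp_seq P n has_derivative comp_seq_deriv DP P n x) (at x within ball 0 (R/2))"
    if "x \<in> ball 0 (R/2)" for n x
    using that by (intro has_derivative_at_withinI[OF comp_seq_has_derivative]) simp
  have "\<exists>g. \<forall>x\<in>ball 0 (R/2). (\<lambda>n. comp_seq P n x) \<longlonglongrightarrow> g x
      \<and> (g has_derivative limit_deriv x) (at x within ball 0 (R/2))"
    by (rule has_derivative_sequence[OF convex_ball derivs comp_seq_deriv_uniform zero])
  then obtain g where g: "\<And>x. x \<in> ball 0 (R/2) \<Longrightarrow> (\<lambda>n. comp_seq P n x) \<longlonglongrightarrow> g x"
      "(g has_derivative limit_deriv x) (at x within ball 0 (R/2))"
    using x by blast
  have g_eq: "g x = limit_map x" if "x \<in> ball 0 (R/2)" for x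
    using limI[OF g(1)[OF that]] by (simp add: limit_map_def)
  show "(\<lambda>n. comp_seq P n x) \<longlonglongrightarrow> limit_map x"
    using g(1)[OF x] unfolding g_eq[OF x] .
  have "(g has_derivative limit_deriv x) (at x)"
    using g(2) unfolding at_within_open[OF x open_ball] .
  then show "(limit_map has_derivative limit_deriv x) (at x)"
    by (rule has_derivative_transform_within_open[OF _ open_ball x g_eq])
qed

lemma limit_map_zero: "limit_map 0 = 0"
  using limit_map_converges(1)[of 0] R_pos by (simp add: comp_seq_zero LIMSEQ_const_iff)

lemma limit_deriv_near_id:
  assumes "x \<in> ball 0 (R/2)"
  shows "norm (limit_deriv x h - h) \<le> 1/2 * norm h"
proof (rule LIMSEQ_le_const2)
  show "(\<lambda>n. norm (comp_seq_deriv DP P n x h - h)) \<longlonglongrightarrow> norm (limit_deriv x h - h)"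
    using assms by (intro tendsto_intros comp_seq_deriv_tendsto) simp
  have "norm (comp_seq_deriv DP P n x h - h) \<le> 1/2 * norm h" for n
  proof -
    have "norm (comp_seq_deriv DP P n x h - h) \<le> 2 * sum \<delta> {..<n} * norm h"
      using assms by (intro comp_seq_deriv_near_id) simp
    also have "\<dots> \<le> 1/2 * norm h"
      using partial_sum_le[of n] by (intro mult_right_mono) auto
    finally show ?thesis .
  qed
  then show "\<exists>N. \<forall>n\<ge>N. norm (comp_seq_deriv DP P n x h - h) \<le> 1/2 * norm h" by blast
qed

lemma limit_map_lipschitz:
  assumes "x \<in> ball 0 (R/2)" "y \<in> ball 0 (R/2)"
  shows "norm ((limit_map x - x) - (limit_map y - y)) \<le> 1/2 * norm (x - y)"
proof (rule differentiable_bound[where f="\<lambda>w. limit_map w - w" and S="ball 0 (R/2)"])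
  show "((\<lambda>w. limit_map w - w) has_derivative (\<lambda>h. limit_deriv x h - h)) (at x within ball 0 (R/2))"
    if "x \<in> ball 0 (R/2)" for x
    using that
    by (intro has_derivative_diff[OF has_derivative_at_withinI has_derivative_ident] limit_map_converges(2))
  show "onorm (\<lambda>h. limit_deriv x h - h) \<le> 1/2" if "x \<in> ball 0 (R/2)" for x
    using limit_deriv_near_id[OF that] by (intro onorm_le) blast
qed (use assms in auto)

lemma inj_on_limit_map: "inj_on limit_map (ball 0 (R/2))"
  using limit_map_lipschitz by (rule inj_on_half_lipschitz_perturbation)

lemma inj_limit_deriv: "x \<in> ball 0 (R/2) \<Longrightarrow> inj (limit_deriv x)"
  using limit_deriv_near_id
  by (intro inj_linear_near_id has_derivative_linear[OF limit_map_converges(2)]) blast+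

lemma limit_map_surj:
  assumes "norm y < R/8"
  shows "\<exists>x\<in>ball 0 (R/2). limit_map x = y"
proof (rule half_lipschitz_perturbation_surj[OF _ _ limit_map_zero limit_map_lipschitz])
  show "continuous_on (ball 0 (R/2)) limit_map"
    using limit_map_converges(2) by (meson continuous_at_imp_continuous_on has_derivative_continuous)
qed (use R_pos assms in auto)

end

lemma weight_step_bound:
  fixes A B Y A' B' Y' u v r :: real and k :: nat
  assumes "A > 0" "B > 0" "Y \<ge> 0" "Y' \<ge> 0" "u > 0" "v > 0" "u \<le> r"
    "A' = u * A" "B' = v * B" "Y' \<le> r * Y"
  shows "(1 + Y' / A') * (A' + Y') ^ k / B' \<le> (r ^ (k + 1) / (u * v)) * ((1 + Y / A) * (A + Y) ^ k / B)"
proof -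
  have "Y' / A' \<le> (r * Y) / (u * A)"
    using assms(1,5,8,10) by (simp add: divide_right_mono)
  moreover have "1 \<le> r / u" using assms by simp
  ultimately have e1: "1 + Y' / A' \<le> (r / u) * (1 + Y / A)"
    by (simp add: distrib_left)
  have "u * A \<le> r * A" using assms by (simp add: mult_right_mono)
  then have "A' + Y' \<le> r * A + r * Y" using assms(8,10) by linarith
  then have "A' + Y' \<le> r * (A + Y)" by (simp add: distrib_left)
  then have e2: "(A' + Y') ^ k \<le> (r * (A + Y)) ^ k"
    using assms by (simp add: power_mono)
  have "(1 + Y' / A') * (A' + Y') ^ k \<le> ((r / u) * (1 + Y / A)) * (r * (A + Y)) ^ k"
    using e1 e2 assms by (intro mult_mono) auto
  then have "(1 + Y' / A') * (A' + Y') ^ k / B' \<le> ((r / u) * (1 + Y / A)) * (r * (A + Y)) ^ k / (v * B)"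
    unfolding assms(9) by (rule divide_right_mono) (use assms in simp)
  also have "\<dots> = (r ^ (k + 1) / (u * v)) * ((1 + Y / A) * (A + Y) ^ k / B)"
    using assms by (simp only: power_mult_distrib) (simp add: field_simps)
  finally show ?thesis .
qed

type_synonym nf_coeffs = "complex \<times> complex \<times> complex"

locale basin_setting =
  fixes k :: nat and \<alpha> \<beta> :: complex
    and F G :: "complex \<times> complex \<Rightarrow> complex \<times> complex"
    and fs :: "nat \<Rightarrow> (complex \<times> complex \<Rightarrow> complex \<times> complex)"
  assumes k_ge_2: "k \<ge> 2"
    and norm_\<alpha>_pow_less: "cmod \<alpha> ^ k < cmod \<beta>" and norm_\<beta>_le: "cmod \<beta> \<le> cmod \<alpha> ^ (k - 1)"
    and F_apply: "\<And>z1 z2. F (z1, z2) = (\<alpha> * z1 + z2 ^ 2, \<beta> * z2)"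
    and G_apply: "\<And>z1 z2. G (z1, z2) = (\<beta> * z1, \<alpha> * z2 + z1 ^ k)"
    and fs_F_or_G: "\<And>n. n \<ge> 1 \<Longrightarrow> fs n = F \<or> fs n = G"
begin

abbreviation "p \<equiv> cmod \<alpha>"
abbreviation "q \<equiv> cmod \<beta>"

lemma q_pos: "q > 0"
  using norm_\<alpha>_pow_less by (smt (verit) norm_ge_zero zero_le_power)

lemma p_pos: "p > 0"
proof (rule ccontr)
  assume "\<not> p > 0"
  then have "p ^ (k - 1) = 0" using k_ge_2 by simp
  then show False using norm_\<beta>_le q_pos by linarith
qed

lemma p_less_1: "p < 1"
proof (rule ccontr)
  assume "\<not> p < 1"
  then have "p ^ (k - 1) \<le> p ^ k" using k_ge_2 by (intro power_increasing) auto
  then show False using norm_\<alpha>_pow_less norm_\<beta>_le by simp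
qed

lemma q_le_p: "q \<le> p"
proof -
  have "p ^ (k - 1) \<le> p ^ 1"
    using k_ge_2 p_pos p_less_1 by (intro power_decreasing) auto
  then show ?thesis using norm_\<beta>_le by simp
qed

lemma q_square_less_p: "q ^ 2 < p"
proof -
  have "q ^ 2 \<le> p ^ 2" using q_le_p q_pos by (intro power_mono) auto
  also have "p ^ 2 < p" using p_pos p_less_1 by (simp add: power2_eq_square)
  finally show ?thesis .
qed

lemma \<alpha>_nonzero: "\<alpha> \<noteq> 0" using p_pos by auto
lemma \<beta>_nonzero: "\<beta> \<noteq> 0" using q_pos by auto

text \<open>\<open>\<mu>\<close> is chosen so that \<open>quad_size\<close> grows at most by the factor \<open>p\<close> under \<open>stepF\<close>, see \<open>\<mu>_eq\<close>.\<close>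
definition "\<mu> = 1 / (p - q ^ 2)"
definition "r\<^sub>G = max q (p ^ 2)"
definition "\<theta> = max (p ^ k / q) (r\<^sub>G ^ (k + 1) / (q * p))"

lemma \<mu>_pos: "\<mu> > 0" using q_square_less_p by (simp add: \<mu>_def)

lemma \<mu>_eq: "1 + \<mu> * q ^ 2 = \<mu> * p"
  using q_square_less_p by (simp add: \<mu>_def field_simps)

lemma r\<^sub>G_ge: "q \<le> r\<^sub>G" "p ^ 2 \<le> r\<^sub>G" by (auto simp: r\<^sub>G_def)

lemma \<theta>_pos: "\<theta> > 0"
  using p_pos q_pos by (simp add: \<theta>_def less_max_iff_disj)

lemma \<theta>_less_1: "\<theta> < 1"
proof -
  have "r\<^sub>G ^ (k + 1) < q * p"
  proof (cases "r\<^sub>G = q")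
    case True
    have "q ^ k \<le> q ^ 2" using k_ge_2 q_pos q_le_p p_less_1 by (intro power_decreasing) auto
    then have "q * q ^ k < q * p" using q_square_less_p q_pos by simp
    then show ?thesis using True by simp
  next
    case False
    then have r: "r\<^sub>G = p ^ 2" by (simp add: r\<^sub>G_def max_def split: if_splits)
    have "p ^ (2 * k + 1) \<le> p ^ k" using p_pos p_less_1 by (intro power_decreasing) auto
    then have "p * p ^ (2 * k + 1) < p * q" using norm_\<alpha>_pow_less p_pos by simp
    moreover have "r\<^sub>G ^ (k + 1) = p * p ^ (2 * k + 1)"
      unfolding r by (simp add: power_mult[symmetric] power_add[symmetric] algebra_simps)
    ultimately show ?thesis by (simp add: mult.commute)
  qed
  then show ?thesis
    using norm_\<alpha>_pow_less p_pos q_pos by (simp add: \<theta>_def)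
qed

definition nf :: "nf_coeffs \<Rightarrow> complex \<times> complex \<Rightarrow> complex \<times> complex" where
  "nf X w = (case X of (a, b, c) \<Rightarrow> (a * fst w + c * (snd w) ^ 2, b * snd w))"

definition nf_inv :: "nf_coeffs \<Rightarrow> complex \<times> complex \<Rightarrow> complex \<times> complex" where
  "nf_inv X w = (case X of (a, b, c) \<Rightarrow> ((fst w - c / b ^ 2 * (snd w) ^ 2) / a, snd w / b))"

lemma nf_inv_nf: "a \<noteq> 0 \<Longrightarrow> b \<noteq> 0 \<Longrightarrow> nf_inv (a, b, c) (nf (a, b, c) w) = w"
  by (cases w) (simp add: nf_inv_def nf_def field_simps power_mult_distrib)

lemma nf_nf_inv: "a \<noteq> 0 \<Longrightarrow> b \<noteq> 0 \<Longrightarrow> nf (a, b, c) (nf_inv (a, b, c) w) = w"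
  by (cases w) (simp add: nf_inv_def nf_def field_simps power_mult_distrib power2_eq_square)

lemma F_eq: "F = (\<lambda>z. (\<alpha> * fst z + (snd z) ^ 2, \<beta> * snd z))"
  using F_apply by (metis prod.collapse)

lemma G_eq: "G = (\<lambda>z. (\<beta> * fst z, \<alpha> * snd z + (fst z) ^ k))"
  using G_apply by (metis prod.collapse)

definition stepF :: "nf_coeffs \<Rightarrow> nf_coeffs" where
  "stepF X = (case X of (a, b, c) \<Rightarrow> (\<alpha> * a, \<beta> * b, \<alpha> * c + b ^ 2))"

definition stepG :: "nf_coeffs \<Rightarrow> nf_coeffs" where
  "stepG X = (case X of (a, b, c) \<Rightarrow> (\<beta> * a, \<alpha> * b, \<beta> * c))"

lemma nf_stepF: "nf (stepF X) w = F (nf X w)"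
  by (cases X) (simp add: nf_def stepF_def F_eq algebra_simps)

lemma nf_stepG: "nf (stepG X) w = (\<beta> * fst (nf X w), \<alpha> * snd (nf X w))"
  by (cases X) (simp add: nf_def stepG_def algebra_simps)

fun nf_params :: "nat \<Rightarrow> nat \<Rightarrow> nf_coeffs" where
  "nf_params m 0 = (1, 1, 0)"
| "nf_params m (Suc n) = (if fs (m + Suc n) = F then stepF (nf_params m n) else stepG (nf_params m n))"

lemma nf_params_nonzero: "fst (nf_params m n) \<noteq> 0 \<and> fst (snd (nf_params m n)) \<noteq> 0"
  by (induction n) (auto simp: stepF_def stepG_def \<alpha>_nonzero \<beta>_nonzero split: prod.splits)

lemma nf_params_cases:
  obtains a b c where "nf_params m n = (a, b, c)" "a \<noteq> 0" "b \<noteq> 0"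
  using nf_params_nonzero[of m n] by (metis prod.collapse)

lemma nf_inv_nf_params: "nf_inv (nf_params m n) (nf (nf_params m n) w) = w"
  using nf_inv_nf by (metis nf_params_cases)

lemma nf_nf_inv_params: "nf (nf_params m n) (nf_inv (nf_params m n) w) = w"
  using nf_nf_inv by (metis nf_params_cases)

lemma nf_params_add: "nf (nf_params 0 (m + n)) w = nf (nf_params m n) (nf (nf_params 0 m) w)"
proof (induction n)
  case 0 then show ?case by (cases w) (simp add: nf_def)
next
  case (Suc n) then show ?case by (simp add: nf_stepF nf_stepG)
qed

lemma nf_inv_params_add:
  "nf_inv (nf_params 0 (m + n)) y = nf_inv (nf_params 0 m) (nf_inv (nf_params m n) y)"
  by (metis nf_inv_nf_params nf_nf_inv_params nf_params_add)

definition quad_size :: "nf_coeffs \<Rightarrow> real" where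
  "quad_size X = (case X of (a, b, c) \<Rightarrow> cmod c + \<mu> * (cmod b) ^ 2)"

text \<open>On the ball of radius \<open>R \<le> 1\<close> the correction attached to \<open>X\<close> differs from the
  identity by \<open>O(weight X * R\<^sup>k\<^sup>-\<^sup>1)\<close>, see \<open>correction_deriv_near_id\<close>; both steps contract
  \<open>weight\<close> by the factor \<open>\<theta> < 1\<close>.\<close>
definition weight :: "nf_coeffs \<Rightarrow> real" where
  "weight X = (case X of (a, b, c) \<Rightarrow> (1 + quad_size X / cmod a) * (cmod a + quad_size X) ^ k / cmod b)"

definition nf_size :: "nf_coeffs \<Rightarrow> real" where
  "nf_size X = (case X of (a, b, c) \<Rightarrow> cmod a + cmod b + quad_size X)"

lemma quad_size_nonneg: "quad_size X \<ge> 0"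
  using \<mu>_pos by (auto simp: quad_size_def split: prod.splits)

lemma weight_nonneg: "weight X \<ge> 0"
  using quad_size_nonneg[of X] by (auto simp: weight_def split: prod.splits)

lemma weight_stepF:
  assumes "a \<noteq> 0" "b \<noteq> 0"
  shows "weight (stepF (a, b, c)) \<le> \<theta> * weight (a, b, c)"
proof -
  have "cmod (\<alpha> * c + b ^ 2) \<le> p * cmod c + (cmod b) ^ 2"
    using norm_triangle_ineq[of "\<alpha> * c" "b ^ 2"] by (simp add: norm_mult norm_power)
  then have "quad_size (stepF (a, b, c)) \<le> p * cmod c + (1 + \<mu> * q ^ 2) * (cmod b) ^ 2"
    by (simp add: quad_size_def stepF_def norm_mult power_mult_distrib algebra_simps)
  also have "\<dots> = p * quad_size (a, b, c)" by (simp add: \<mu>_eq quad_size_def algebra_simps)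
  finally have "weight (stepF (a, b, c)) \<le> (p ^ (k + 1) / (p * q)) * weight (a, b, c)"
    unfolding weight_def
    using weight_step_bound[of "cmod a" "cmod b" "quad_size (a, b, c)" "quad_size (stepF (a, b, c))"
        p q p "cmod (\<alpha> * a)" "cmod (\<beta> * b)" k] assms quad_size_nonneg p_pos q_pos
    by (simp add: stepF_def norm_mult)
  also have "\<dots> \<le> \<theta> * weight (a, b, c)"
    using p_pos weight_nonneg by (intro mult_right_mono) (auto simp: \<theta>_def)
  finally show ?thesis .
qed

lemma weight_stepG:
  assumes "a \<noteq> 0" "b \<noteq> 0"
  shows "weight (stepG (a, b, c)) \<le> \<theta> * weight (a, b, c)"
proof -
  have "quad_size (stepG (a, b, c)) = q * cmod c + \<mu> * p ^ 2 * (cmod b) ^ 2"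
    by (simp add: quad_size_def stepG_def norm_mult power_mult_distrib)
  also have "\<dots> \<le> r\<^sub>G * cmod c + \<mu> * r\<^sub>G * (cmod b) ^ 2"
    using r\<^sub>G_ge \<mu>_pos by (intro add_mono mult_right_mono mult_left_mono) auto
  also have "\<dots> = r\<^sub>G * quad_size (a, b, c)" by (simp add: quad_size_def algebra_simps)
  finally have "weight (stepG (a, b, c)) \<le> (r\<^sub>G ^ (k + 1) / (q * p)) * weight (a, b, c)"
    unfolding weight_def
    using weight_step_bound[of "cmod a" "cmod b" "quad_size (a, b, c)" "quad_size (stepG (a, b, c))"
        q p r\<^sub>G "cmod (\<beta> * a)" "cmod (\<alpha> * b)" k] assms quad_size_nonneg p_pos q_pos r\<^sub>G_ge
    by (simp add: stepG_def norm_mult)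
  also have "\<dots> \<le> \<theta> * weight (a, b, c)"
    using weight_nonneg by (intro mult_right_mono) (auto simp: \<theta>_def)
  finally show ?thesis .
qed

definition "weight\<^sub>0 = (1 + \<mu>) ^ (k + 1)"

lemma weight_nf_params: "weight (nf_params m n) \<le> weight\<^sub>0 * \<theta> ^ n"
proof (induction n)
  case 0 then show ?case by (simp add: weight_def quad_size_def weight\<^sub>0_def)
next
  case (Suc n)
  obtain a b c where X: "nf_params m n = (a, b, c)" "a \<noteq> 0" "b \<noteq> 0"
    by (rule nf_params_cases)
  have "weight (nf_params m (Suc n)) \<le> \<theta> * weight (nf_params m n)"
    using weight_stepF[OF X(2,3)] weight_stepG[OF X(2,3)] X(1) by simp
  also have "\<dots> \<le> \<theta> * (weight\<^sub>0 * \<theta> ^ n)" using Suc \<theta>_pos by simp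
  finally show ?case by (simp add: algebra_simps)
qed

lemma nf_size_nf_params: "nf_size (nf_params m n) \<le> (2 + \<mu>) * p ^ n"
proof (induction n)
  case 0 then show ?case by (simp add: nf_size_def quad_size_def)
next
  case (Suc n)
  obtain a b c where X: "nf_params m n = (a, b, c)" by (metis prod_cases3)
  have "nf_size (stepF (a, b, c)) \<le> p * nf_size (a, b, c)"
  proof -
    have "cmod (\<alpha> * c + b ^ 2) \<le> p * cmod c + (cmod b) ^ 2"
      using norm_triangle_ineq[of "\<alpha> * c" "b ^ 2"] by (simp add: norm_mult norm_power)
    moreover have "q * cmod b \<le> p * cmod b" using q_le_p by (simp add: mult_right_mono)
    moreover have "(cmod b)^2 + \<mu> * (q^2 * (cmod b)^2) = p * (\<mu> * (cmod b)^2)"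
      using arg_cong[OF \<mu>_eq, of "\<lambda>t. t * (cmod b)^2"] by (simp add: algebra_simps)
    ultimately show ?thesis
      by (simp add: nf_size_def quad_size_def stepF_def norm_mult power_mult_distrib algebra_simps)
  qed
  moreover have "nf_size (stepG (a, b, c)) \<le> p * nf_size (a, b, c)"
  proof -
    have "q * cmod a \<le> p * cmod a" "q * cmod c \<le> p * cmod c"
      using q_le_p by (simp_all add: mult_right_mono)
    moreover have "\<mu> * p ^ 2 * (cmod b) ^ 2 \<le> \<mu> * p * (cmod b) ^ 2"
      using \<mu>_pos p_pos p_less_1 by (intro mult_right_mono mult_left_mono) (auto simp: power2_eq_square)
    ultimately show ?thesis
      by (simp add: nf_size_def quad_size_def stepG_def norm_mult power_mult_distrib algebra_simps)
  qed
  ultimately have "nf_size (nf_params m (Suc n)) \<le> p * nf_size (nf_params m n)" using X by simp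
  also have "\<dots> \<le> p * ((2 + \<mu>) * p ^ n)" using Suc p_pos by simp
  finally show ?case by (simp add: algebra_simps)
qed

definition nf_first :: "complex \<Rightarrow> complex \<Rightarrow> complex \<times> complex \<Rightarrow> complex" where
  "nf_first a c w = a * fst w + c * (snd w) ^ 2"

definition correction_shift :: "complex \<Rightarrow> complex \<Rightarrow> complex \<Rightarrow> complex \<times> complex \<Rightarrow> complex" where
  "correction_shift a b c w = (nf_first a c w) ^ k / (\<alpha> * b)"

definition correction :: "complex \<Rightarrow> complex \<Rightarrow> complex \<Rightarrow> complex \<times> complex \<Rightarrow> complex \<times> complex" where
  "correction a b c w =
     (fst w - c / a * (2 * snd w * correction_shift a b c w + (correction_shift a b c w) ^ 2),
      snd w + correction_shift a b c w)"

lemma G_nf: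
  assumes "a \<noteq> 0" "b \<noteq> 0"
  shows "G (nf (a, b, c) w) = nf (stepG (a, b, c)) (correction a b c w)"
proof -
  define e where "e = correction_shift a b c w"
  have "(nf_first a c w) ^ k = \<alpha> * b * e"
    using assms \<alpha>_nonzero by (simp add: e_def correction_shift_def)
  then show ?thesis
    using assms
    by (simp add: G_eq nf_def stepG_def correction_def e_def[symmetric] nf_first_def
        power2_eq_square field_simps)
qed

definition correction_shift_deriv ::
  "complex \<Rightarrow> complex \<Rightarrow> complex \<Rightarrow> complex \<times> complex \<Rightarrow> complex \<times> complex \<Rightarrow> complex" where
  "correction_shift_deriv a b c w h =
     of_nat k * (nf_first a c w) ^ (k - 1) * (a * fst h + 2 * c * snd w * snd h) / (\<alpha> * b)"

definition correction_deriv ::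
  "complex \<Rightarrow> complex \<Rightarrow> complex \<Rightarrow> complex \<times> complex \<Rightarrow> complex \<times> complex \<Rightarrow> complex \<times> complex" where
  "correction_deriv a b c w h =
     (fst h - c / a * (2 * snd h * correction_shift a b c w + 2 * snd w * correction_shift_deriv a b c w h
                       + 2 * correction_shift a b c w * correction_shift_deriv a b c w h),
      snd h + correction_shift_deriv a b c w h)"

lemma correction_shift_has_derivative:
  assumes "b \<noteq> 0"
  shows "(correction_shift a b c has_derivative correction_shift_deriv a b c w) (at w)"
  unfolding correction_shift_def[abs_def] correction_shift_deriv_def[abs_def] nf_first_def
  using assms \<alpha>_nonzero
  by (auto intro!: derivative_eq_intros simp: fun_eq_iff field_simps)

lemma correction_has_derivative:
  assumes "a \<noteq> 0" "b \<noteq> 0"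
  shows "(correction a b c has_derivative correction_deriv a b c w) (at w)"
  unfolding correction_def[abs_def] correction_deriv_def[abs_def]
  using assms by (auto intro!: derivative_eq_intros correction_shift_has_derivative simp: fun_eq_iff field_simps)

lemma correction_deriv_homogeneous: "cscale2_homogeneous (correction_deriv a b c w)"
  unfolding cscale2_homogeneous_def
  by (simp add: correction_deriv_def correction_shift_deriv_def cscale2_def algebra_simps)

definition correction_scale :: "nf_coeffs \<Rightarrow> real \<Rightarrow> real" where
  "correction_scale X R = (case X of (a, b, c) \<Rightarrow> (cmod a + quad_size X) ^ k / cmod b * R ^ (k - 1) / p)"

lemma correction_scale_nonneg: "R \<ge> 0 \<Longrightarrow> correction_scale X R \<ge> 0"
  using quad_size_nonneg[of X] p_pos by (auto simp: correction_scale_def split: prod.splits)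

lemma nf_first_bound:
  assumes "norm w \<le> R" "R \<le> 1"
  shows "cmod (nf_first a c w) \<le> (cmod a + quad_size (a, b, c)) * R"
proof -
  have w2: "cmod (snd w) \<le> R" using assms norm_snd_le[of "snd w" "fst w"] by simp
  then have "R \<ge> 0" using norm_ge_zero order_trans by blast
  have "cmod (snd w) ^ 2 \<le> R ^ 2" using w2 by (intro power_mono) auto
  also have "R ^ 2 \<le> R" using mult_left_mono[OF assms(2) \<open>R \<ge> 0\<close>] by (simp add: power2_eq_square)
  finally have w22: "cmod (snd w) ^ 2 \<le> R" .
  have "cmod (nf_first a c w) \<le> cmod a * cmod (fst w) + cmod c * cmod (snd w) ^ 2"
    using norm_triangle_ineq[of "a * fst w" "c * (snd w)^2"] by (simp add: nf_first_def norm_mult norm_power)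
  also have "\<dots> \<le> cmod a * R + cmod c * R"
    using norm_fst_le[of "fst w" "snd w"] assms(1) w22 by (intro add_mono mult_left_mono) auto
  also have "\<dots> \<le> (cmod a + quad_size (a, b, c)) * R"
    using \<mu>_pos \<open>R \<ge> 0\<close> by (simp add: quad_size_def distrib_right)
  finally show ?thesis .
qed

lemma correction_shift_bound:
  assumes "b \<noteq> 0" "norm w \<le> R" "R \<le> 1"
  shows "cmod (correction_shift a b c w) \<le> correction_scale (a, b, c) R"
proof -
  define S where "S = cmod a + quad_size (a, b, c)"
  have "R \<ge> 0" using assms(2) norm_ge_zero[of w] by linarith
  have "S \<ge> 0" using quad_size_nonneg[of "(a, b, c)"] by (simp add: S_def)
  have "cmod (correction_shift a b c w) = cmod (nf_first a c w) ^ k / (p * cmod b)"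
    by (simp add: correction_shift_def norm_divide norm_mult norm_power)
  also have "\<dots> \<le> (S * R) ^ k / (p * cmod b)"
    using nf_first_bound[OF assms(2,3)] by (intro divide_right_mono power_mono) (auto simp: S_def)
  also have "\<dots> \<le> S ^ k * R ^ (k - 1) / (p * cmod b)"
    using \<open>R \<ge> 0\<close> \<open>S \<ge> 0\<close> assms(3) p_pos
    by (auto simp: power_mult_distrib intro!: divide_right_mono mult_left_mono power_decreasing)
  also have "\<dots> = correction_scale (a, b, c) R" by (simp add: correction_scale_def S_def)
  finally show ?thesis .
qed

lemma correction_shift_deriv_bound:
  assumes "b \<noteq> 0" "norm w \<le> R" "R \<le> 1"
  shows "cmod (correction_shift_deriv a b c w h) \<le> 2 * real k * correction_scale (a, b, c) R * norm h"
proof -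
  define S where "S = cmod a + quad_size (a, b, c)"
  have "R \<ge> 0" using assms(2) norm_ge_zero[of w] by linarith
  have "S \<ge> 0" using quad_size_nonneg[of "(a, b, c)"] by (simp add: S_def)
  have "cmod (snd w) \<le> 1" using assms norm_snd_le[of "snd w" "fst w"] by simp
  have "cmod c \<le> quad_size (a, b, c)" using \<mu>_pos by (simp add: quad_size_def)
  have "cmod (a * fst h + 2 * c * snd w * snd h) \<le> cmod a * cmod (fst h) + 2 * cmod c * cmod (snd w) * cmod (snd h)"
    using norm_triangle_ineq[of "a * fst h" "2 * c * snd w * snd h"] by (simp add: norm_mult)
  also have "\<dots> \<le> cmod a * norm h + 2 * quad_size (a, b, c) * 1 * norm h"
    using norm_fst_le[of "fst h" "snd h"] norm_snd_le[of "snd h" "fst h"]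
      \<open>cmod (snd w) \<le> 1\<close> \<open>cmod c \<le> quad_size (a, b, c)\<close> quad_size_nonneg[of "(a, b, c)"]
    by (intro add_mono mult_left_mono mult_mono) auto
  also have "\<dots> \<le> 2 * S * norm h" by (simp add: S_def algebra_simps)
  finally have lin: "cmod (a * fst h + 2 * c * snd w * snd h) \<le> 2 * S * norm h" .
  have "cmod (correction_shift_deriv a b c w h)
      = real k * cmod (nf_first a c w) ^ (k - 1) * cmod (a * fst h + 2 * c * snd w * snd h) / (p * cmod b)"
    by (simp add: correction_shift_deriv_def norm_divide norm_mult norm_power)
  also have "\<dots> \<le> real k * (S * R) ^ (k - 1) * (2 * S * norm h) / (p * cmod b)"
    using nf_first_bound[OF assms(2,3)] lin \<open>R \<ge> 0\<close> \<open>S \<ge> 0\<close>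
    by (intro divide_right_mono mult_mono mult_left_mono power_mono) (auto simp: S_def)
  also have "\<dots> = 2 * real k * (S ^ (k - 1) * S * R ^ (k - 1) / (p * cmod b)) * norm h"
    by (simp add: power_mult_distrib)
  also have "S ^ (k - 1) * S = S ^ k"
    using k_ge_2 by (metis One_nat_def Suc_pred less_le_trans pos2 power_Suc2)
  also have "2 * real k * (S ^ k * R ^ (k - 1) / (p * cmod b)) * norm h = 2 * real k * correction_scale (a, b, c) R * norm h"
    by (simp add: correction_scale_def S_def)
  finally show ?thesis .
qed

lemma correction_deriv_quadratic_bound:
  assumes b: "b \<noteq> 0" and w: "norm w \<le> R" and "R \<le> 1" and small: "correction_scale (a, b, c) R \<le> 1"
  shows "cmod (2 * snd h * correction_shift a b c w + 2 * snd w * correction_shift_deriv a b c w h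
                 + 2 * correction_shift a b c w * correction_shift_deriv a b c w h)
         \<le> (2 + 8 * real k) * correction_scale (a, b, c) R * norm h"
proof -
  define \<eta> where "\<eta> = correction_scale (a, b, c) R"
  let ?e = "correction_shift a b c w" and ?d = "correction_shift_deriv a b c w h"
  have "\<eta> \<ge> 0" unfolding \<eta>_def using w norm_ge_zero[of w] by (intro correction_scale_nonneg) linarith
  have e: "cmod ?e \<le> \<eta>" unfolding \<eta>_def by (rule correction_shift_bound[OF b w \<open>R \<le> 1\<close>])
  have d: "cmod ?d \<le> 2 * real k * \<eta> * norm h"
    unfolding \<eta>_def by (rule correction_shift_deriv_bound[OF b w \<open>R \<le> 1\<close>])
  have "cmod (snd w) \<le> 1" using w \<open>R \<le> 1\<close> norm_snd_le[of "snd w" "fst w"] by simp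
  have "cmod (2 * snd h * ?e + 2 * snd w * ?d + 2 * ?e * ?d)
      \<le> 2 * cmod (snd h) * cmod ?e + 2 * cmod (snd w) * cmod ?d + 2 * cmod ?e * cmod ?d"
    using norm_triangle_ineq[of "2 * snd h * ?e + 2 * snd w * ?d" "2 * ?e * ?d"]
      norm_triangle_ineq[of "2 * snd h * ?e" "2 * snd w * ?d"]
    by (simp add: norm_mult)
  also have "\<dots> \<le> 2 * norm h * \<eta> + 2 * 1 * (2 * real k * \<eta> * norm h) + 2 * 1 * (2 * real k * \<eta> * norm h)"
    using norm_snd_le[of "snd h" "fst h"] \<open>cmod (snd w) \<le> 1\<close> e d small \<open>\<eta> \<ge> 0\<close>
    by (intro add_mono mult_left_mono mult_mono) (auto simp: \<eta>_def)
  finally show ?thesis by (simp add: \<eta>_def algebra_simps)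
qed

lemma correction_deriv_near_id:
  assumes a: "a \<noteq> 0" and b: "b \<noteq> 0" and w: "norm w \<le> R" and "R \<le> 1"
    and small: "weight (a, b, c) * R ^ (k - 1) / p \<le> 1"
  shows "norm (correction_deriv a b c w h - h) \<le> ((2 + 8 * real k) / p) * R ^ (k - 1) * weight (a, b, c) * norm h"
proof -
  define \<eta> where "\<eta> = correction_scale (a, b, c) R"
  define Q where "Q = 1 + quad_size (a, b, c) / cmod a"
  define S where "S = 2 * snd h * correction_shift a b c w + 2 * snd w * correction_shift_deriv a b c w h
                      + 2 * correction_shift a b c w * correction_shift_deriv a b c w h"
  let ?d = "correction_shift_deriv a b c w h" and ?K = "(2 + 8 * real k) * \<eta> * norm h"
  have "\<eta> \<ge> 0" unfolding \<eta>_def using w norm_ge_zero[of w] by (intro correction_scale_nonneg) linarith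
  have "1 \<le> Q" using quad_size_nonneg[of "(a, b, c)"] by (simp add: Q_def)
  have weight_eq: "weight (a, b, c) * R ^ (k - 1) / p = Q * \<eta>"
    by (simp add: weight_def correction_scale_def Q_def \<eta>_def)
  then have "\<eta> \<le> 1"
    using small mult_right_mono[OF \<open>1 \<le> Q\<close> \<open>\<eta> \<ge> 0\<close>] by simp
  then have S: "cmod S \<le> ?K"
    unfolding S_def \<eta>_def by (rule correction_deriv_quadratic_bound[OF b w \<open>R \<le> 1\<close>])
  have "cmod ?d \<le> ?K"
    using correction_shift_deriv_bound[OF b w \<open>R \<le> 1\<close>, of a c h] \<open>\<eta> \<ge> 0\<close>
      mult_right_mono[of "2 * real k" "2 + 8 * real k" "\<eta> * norm h"]
    by (simp add: \<eta>_def mult.assoc)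
  have "cmod (c / a) \<le> Q - 1"
    using \<mu>_pos a by (simp add: Q_def quad_size_def norm_divide divide_right_mono)
  have "correction_deriv a b c w h - h = (- (c / a * S), ?d)"
    by (cases h) (simp add: correction_deriv_def S_def)
  then have "norm (correction_deriv a b c w h - h) \<le> cmod (c / a) * cmod S + cmod ?d"
    using norm_Pair_le[of "- (c / a * S)" ?d] by (simp only: norm_minus_cancel norm_mult)
  also have "\<dots> \<le> (Q - 1) * ?K + ?K"
    using \<open>1 \<le> Q\<close> \<open>cmod ?d \<le> ?K\<close> by (intro add_mono mult_mono[OF \<open>cmod (c / a) \<le> Q - 1\<close> S]) auto
  also have "\<dots> = ((2 + 8 * real k) / p) * R ^ (k - 1) * weight (a, b, c) * norm h"
    using weight_eq p_pos by (simp add: field_simps)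
  finally show ?thesis .
qed

definition correction_seq :: "nat \<Rightarrow> nat \<Rightarrow> complex \<times> complex \<Rightarrow> complex \<times> complex" where
  "correction_seq m n = (case n of 0 \<Rightarrow> id | Suc j \<Rightarrow>
      (if fs (m + Suc j) = F then id else (case nf_params m j of (a, b, c) \<Rightarrow> correction a b c)))"

definition correction_seq_deriv ::
  "nat \<Rightarrow> nat \<Rightarrow> complex \<times> complex \<Rightarrow> complex \<times> complex \<Rightarrow> complex \<times> complex" where
  "correction_seq_deriv m j w = (if fs (m + Suc j) = F then id
      else (case nf_params m j of (a, b, c) \<Rightarrow> correction_deriv a b c w))"

lemma fs_G_if_not_F: "fs (Suc n) \<noteq> F \<Longrightarrow> fs (Suc n) = G"
  using fs_F_or_G[of "Suc n"] by auto

lemma nf_inv_fs_step: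
  "nf_inv (nf_params m (Suc n)) (fs (m + Suc n) x) = correction_seq m (Suc n) (nf_inv (nf_params m n) x)"
proof -
  obtain a b c where X: "nf_params m n = (a, b, c)" "a \<noteq> 0" "b \<noteq> 0" by (rule nf_params_cases)
  define w where "w = nf_inv (nf_params m n) x"
  have x: "x = nf (a, b, c) w" using nf_nf_inv_params[of m n x] X by (simp add: w_def)
  show ?thesis
  proof (cases "fs (m + Suc n) = F")
    case True
    obtain a' b' c' where "stepF (a, b, c) = (a', b', c')" "a' \<noteq> 0" "b' \<noteq> 0"
      using X \<alpha>_nonzero \<beta>_nonzero by (simp add: stepF_def)
    then show ?thesis
      using True X nf_inv_nf[of a' b' c'] nf_inv_nf[OF X(2,3)]
      by (simp add: correction_seq_def x nf_stepF[symmetric])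
  next
    case False
    then have "fs (m + Suc n) = G" using fs_G_if_not_F[of "m + n"] by simp
    obtain a' b' c' where "stepG (a, b, c) = (a', b', c')" "a' \<noteq> 0" "b' \<noteq> 0"
      using X \<alpha>_nonzero \<beta>_nonzero by (simp add: stepG_def)
    then show ?thesis
      using False \<open>fs (m + Suc n) = G\<close> X nf_inv_nf[of a' b' c'] nf_inv_nf[OF X(2,3)]
      by (simp add: correction_seq_def x G_nf)
  qed
qed

lemma comp_correction_seq:
  "comp_seq (correction_seq m) n x = nf_inv (nf_params m n) (comp_seq (\<lambda>j. fs (m + j)) n x)"
proof (induction n)
  case 0 then show ?case by (simp add: nf_inv_def)
next
  case (Suc n)
  let ?orbit = "comp_seq (\<lambda>j. fs (m + j)) n x"
  have "comp_seq (correction_seq m) (Suc n) x = correction_seq m (Suc n) (nf_inv (nf_params m n) ?orbit)"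
    using Suc by simp
  also have "\<dots> = nf_inv (nf_params m (Suc n)) (fs (m + Suc n) ?orbit)"
    by (rule nf_inv_fs_step[symmetric])
  finally show ?case by simp
qed

definition "\<kappa> = (2 + 8 * real k) / p"
definition "\<rho> = min 1 (min (p / weight\<^sub>0) ((1 - \<theta>) / (4 * \<kappa> * weight\<^sub>0)))"
definition "\<delta> n = \<kappa> * \<rho> ^ (k - 1) * weight\<^sub>0 * \<theta> ^ n"

lemma weight\<^sub>0_ge_1: "weight\<^sub>0 \<ge> 1"
  unfolding weight\<^sub>0_def by (rule one_le_power) (use \<mu>_pos in simp)

lemma \<kappa>_pos: "\<kappa> > 0" using p_pos by (simp add: \<kappa>_def)

lemma \<rho>_pos: "\<rho> > 0"
  using p_pos weight\<^sub>0_ge_1 \<theta>_less_1 \<kappa>_pos by (simp add: \<rho>_def)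

lemma \<rho>_le_1: "\<rho> \<le> 1" by (simp add: \<rho>_def)

lemma \<rho>_power_le: "\<rho> ^ (k - 1) \<le> \<rho>"
  using power_decreasing[of 1 "k - 1" \<rho>] \<rho>_pos \<rho>_le_1 k_ge_2 by simp

lemma weight\<^sub>0_\<rho>_le: "weight\<^sub>0 * \<rho> ^ (k - 1) \<le> p"
proof -
  have "weight\<^sub>0 * \<rho> ^ (k - 1) \<le> weight\<^sub>0 * (p / weight\<^sub>0)"
    using \<rho>_power_le weight\<^sub>0_ge_1 by (intro mult_left_mono) (auto simp: \<rho>_def)
  then show ?thesis using weight\<^sub>0_ge_1 by simp
qed

lemma \<delta>_sums: "\<delta> sums (\<kappa> * \<rho> ^ (k - 1) * weight\<^sub>0 / (1 - \<theta>))"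
  using sums_mult[OF geometric_sums[of \<theta>], of "\<kappa> * \<rho> ^ (k - 1) * weight\<^sub>0"] \<theta>_pos \<theta>_less_1
  by (simp add: \<delta>_def[abs_def] divide_inverse)

lemma \<delta>_suminf_le: "suminf \<delta> \<le> 1/4"
proof -
  have "\<kappa> * \<rho> ^ (k - 1) * weight\<^sub>0 \<le> \<kappa> * ((1 - \<theta>) / (4 * \<kappa> * weight\<^sub>0)) * weight\<^sub>0"
    using \<rho>_power_le \<kappa>_pos weight\<^sub>0_ge_1 by (intro mult_right_mono mult_left_mono) (auto simp: \<rho>_def)
  also have "\<dots> = (1 - \<theta>) / 4" using \<kappa>_pos weight\<^sub>0_ge_1 by (simp add: field_simps)
  finally have "\<kappa> * \<rho> ^ (k - 1) * weight\<^sub>0 / (1 - \<theta>) \<le> 1/4"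
    using \<theta>_less_1 by (simp add: field_simps)
  then show ?thesis by (simp only: sums_unique[OF \<delta>_sums, symmetric])
qed

lemma correction_seq_zero: "correction_seq m (Suc n) 0 = 0"
  using k_ge_2 by (cases "nf_params m n")
    (simp add: correction_seq_def correction_def correction_shift_def nf_first_def zero_prod_def)

lemma correction_seq_has_derivative:
  "(correction_seq m (Suc n) has_derivative correction_seq_deriv m n w) (at w)"
proof -
  obtain a b c where X: "nf_params m n = (a, b, c)" "a \<noteq> 0" "b \<noteq> 0" by (rule nf_params_cases)
  then show ?thesis using correction_has_derivative[OF X(2,3)]
    by (simp add: correction_seq_def correction_seq_deriv_def has_derivative_ident id_def)
qed

lemma correction_seq_deriv_homogeneous: "cscale2_homogeneous (correction_seq_deriv m n w)"
  using cscale2_homogeneous_id correction_deriv_homogeneous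
  by (cases "nf_params m n") (simp add: correction_seq_deriv_def)

lemma correction_seq_deriv_near_id:
  assumes "norm w \<le> \<rho>"
  shows "norm (correction_seq_deriv m n w h - h) \<le> \<delta> n * norm h"
proof (cases "fs (m + Suc n) = F")
  case True
  then show ?thesis using \<kappa>_pos \<rho>_pos weight\<^sub>0_ge_1 \<theta>_pos by (simp add: correction_seq_deriv_def \<delta>_def)
next
  case False
  obtain a b c where X: "nf_params m n = (a, b, c)" "a \<noteq> 0" "b \<noteq> 0" by (rule nf_params_cases)
  have W: "weight (a, b, c) \<le> weight\<^sub>0 * \<theta> ^ n" using weight_nf_params[of m n] X by simp
  also have "\<dots> \<le> weight\<^sub>0"
    using weight\<^sub>0_ge_1 \<theta>_pos \<theta>_less_1 by (simp add: power_le_one mult_left_le)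
  finally have "weight (a, b, c) * \<rho> ^ (k - 1) \<le> p"
    using weight\<^sub>0_\<rho>_le \<rho>_pos by (meson mult_right_mono order_trans zero_le_power less_imp_le)
  then have small: "weight (a, b, c) * \<rho> ^ (k - 1) / p \<le> 1" using p_pos by simp
  have "norm (correction_seq_deriv m n w h - h) \<le> \<kappa> * \<rho> ^ (k - 1) * weight (a, b, c) * norm h"
    using False X correction_deriv_near_id[OF X(2,3) assms \<rho>_le_1 small, of h]
    by (simp add: correction_seq_deriv_def \<kappa>_def)
  also have "\<dots> \<le> \<delta> n * norm h"
    using W \<kappa>_pos \<rho>_pos by (simp add: \<delta>_def mult_left_mono mult_right_mono algebra_simps)
  finally show ?thesis .
qed

lemma correction_near_identity: "near_identity_sequence \<rho> (correction_seq m) (correction_seq_deriv m) \<delta>"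
proof
  show "\<delta> n \<ge> 0" for n using \<kappa>_pos \<rho>_pos weight\<^sub>0_ge_1 \<theta>_pos by (simp add: \<delta>_def)
qed (use \<rho>_pos correction_seq_zero correction_seq_has_derivative correction_seq_deriv_near_id \<delta>_suminf_le
      sums_summable[OF \<delta>_sums] in auto)

lemma F_has_derivative:
  "(F has_derivative (\<lambda>h. (\<alpha> * fst h + 2 * snd z * snd h, \<beta> * snd h))) (at z)"
  unfolding F_eq by (auto intro!: derivative_eq_intros simp: fun_eq_iff algebra_simps)

lemma G_has_derivative:
  "(G has_derivative (\<lambda>h. (\<beta> * fst h, \<alpha> * snd h + of_nat k * (fst z) ^ (k - 1) * fst h))) (at z)"
  unfolding G_eq by (auto intro!: derivative_eq_intros simp: fun_eq_iff algebra_simps)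

lemma fs_has_derivative:
  assumes "n \<ge> 1"
  shows "\<exists>D. (fs n has_derivative D) (at z) \<and> cscale2_homogeneous D \<and> inj D"
proof -
  consider "fs n = F" | "fs n = G" using fs_F_or_G[OF assms] by blast
  then show ?thesis
  proof cases
    case 1
    have "inj (\<lambda>h. (\<alpha> * fst h + 2 * snd z * snd h, \<beta> * snd h))"
      using \<alpha>_nonzero \<beta>_nonzero by (intro injI) (auto simp: prod_eq_iff)
    moreover have "cscale2_homogeneous (\<lambda>h. (\<alpha> * fst h + 2 * snd z * snd h, \<beta> * snd h))"
      by (simp add: cscale2_homogeneous_def cscale2_def algebra_simps)
    ultimately show ?thesis using F_has_derivative[of z] unfolding 1 by blast
  next
    case 2
    have "inj (\<lambda>h. (\<beta> * fst h, \<alpha> * snd h + of_nat k * (fst z) ^ (k - 1) * fst h))"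
      using \<alpha>_nonzero \<beta>_nonzero by (intro injI) (auto simp: prod_eq_iff)
    moreover have "cscale2_homogeneous (\<lambda>h. (\<beta> * fst h, \<alpha> * snd h + of_nat k * (fst z) ^ (k - 1) * fst h))"
      by (simp add: cscale2_homogeneous_def cscale2_def algebra_simps)
    ultimately show ?thesis using G_has_derivative[of z] unfolding 2 by blast
  qed
qed

lemma comp_seq_fs_has_derivative:
  "\<exists>D. (comp_seq fs m has_derivative D) (at z) \<and> cscale2_homogeneous D \<and> inj D"
proof (induction m arbitrary: z)
  case 0
  show ?case
    unfolding comp_seq.simps using cscale2_homogeneous_id has_derivative_id inj_on_id by blast
next
  case (Suc m)
  obtain D1 where D1: "(comp_seq fs m has_derivative D1) (at z)" "cscale2_homogeneous D1" "inj D1"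
    using Suc by blast
  obtain D2 where D2: "(fs (Suc m) has_derivative D2) (at (comp_seq fs m z))" "cscale2_homogeneous D2" "inj D2"
    using fs_has_derivative[of "Suc m" "comp_seq fs m z"] by auto
  have "(comp_seq fs (Suc m) has_derivative D2 \<circ> D1) (at z)"
    using has_derivative_compose[OF D1(1) D2(1)] by (simp add: o_def)
  then show ?case
    using D1 D2 by (metis cscale2_homogeneous_comp inj_compose)
qed

lemma continuous_comp_seq_fs: "continuous (at z) (comp_seq fs m)"
  using comp_seq_fs_has_derivative has_derivative_continuous by blast

lemma bij_F: "bij F"
  by (rule o_bij[where g="\<lambda>u. ((fst u - (snd u / \<beta>) ^ 2) / \<alpha>, snd u / \<beta>)"])
    (use \<alpha>_nonzero \<beta>_nonzero in \<open>auto simp: F_eq fun_eq_iff field_simps\<close>)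

lemma bij_G: "bij G"
  by (rule o_bij[where g="\<lambda>u. (fst u / \<beta>, (snd u - (fst u / \<beta>) ^ k) / \<alpha>)"])
    (use \<alpha>_nonzero \<beta>_nonzero in \<open>auto simp: G_eq fun_eq_iff field_simps\<close>)

lemma bij_comp_seq_fs: "bij (comp_seq fs m)"
proof (induction m)
  case (Suc m)
  have "bij (fs (Suc m))" using fs_F_or_G[of "Suc m"] bij_F bij_G by auto
  then show ?case using bij_comp[OF Suc] by (simp only: comp_seq.simps)
qed (simp only: comp_seq.simps bij_id)

lemma nf_bound: "norm (nf X w) \<le> nf_size X * (1 + norm w) ^ 2"
proof -
  obtain a b c where X: "X = (a, b, c)" by (metis prod_cases3)
  let ?T = "(1 + norm w) ^ 2"
  have "cmod (fst w) \<le> norm w" "cmod (snd w) \<le> norm w"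
    using norm_fst_le[of "fst w" "snd w"] norm_snd_le[of "snd w" "fst w"] by simp_all
  moreover have "1 + norm w \<le> ?T"
    using mult_left_mono[of 1 "1 + norm w" "1 + norm w"] by (simp add: power2_eq_square)
  ultimately have T: "cmod (fst w) \<le> ?T" "cmod (snd w) \<le> ?T" "cmod (snd w) ^ 2 \<le> ?T"
    by (auto intro: power_mono)
  have "norm (nf X w) \<le> cmod (a * fst w + c * (snd w) ^ 2) + cmod (b * snd w)"
    using norm_Pair_le by (simp add: nf_def X)
  also have "\<dots> \<le> cmod a * cmod (fst w) + cmod c * cmod (snd w) ^ 2 + cmod b * cmod (snd w)"
    using norm_triangle_ineq[of "a * fst w" "c * (snd w) ^ 2"] by (simp add: norm_mult norm_power)
  also have "\<dots> \<le> cmod a * ?T + cmod c * ?T + cmod b * ?T"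
    using T by (intro add_mono mult_left_mono) auto
  also have "\<dots> \<le> nf_size X * ?T"
    using \<mu>_pos by (simp add: nf_size_def quad_size_def X distrib_right[symmetric] mult_right_mono)
  finally show ?thesis .
qed

lemma nf_size_nonneg: "nf_size X \<ge> 0"
  using quad_size_nonneg[of X] by (auto simp: nf_size_def split: prod.splits)

lemma nf_size_nf_params_tendsto_zero: "(\<lambda>n. nf_size (nf_params m n)) \<longlonglongrightarrow> 0"
proof (rule Lim_null_comparison)
  show "\<forall>\<^sub>F n in sequentially. norm (nf_size (nf_params m n)) \<le> (2 + \<mu>) * p ^ n"
    using nf_size_nf_params nf_size_nonneg by simp
  show "(\<lambda>n. (2 + \<mu>) * p ^ n) \<longlonglongrightarrow> 0"
    using p_pos p_less_1 by (intro tendsto_mult_right_zero LIMSEQ_power_zero) simp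
qed

lemma nf_nf_params_tendsto_zero: "(\<lambda>n. nf (nf_params m n) w) \<longlonglongrightarrow> 0"
proof (rule Lim_null_comparison)
  show "\<forall>\<^sub>F n in sequentially. norm (nf (nf_params m n) w) \<le> nf_size (nf_params m n) * (1 + norm w) ^ 2"
    by (simp add: nf_bound)
  show "(\<lambda>n. nf_size (nf_params m n) * (1 + norm w) ^ 2) \<longlonglongrightarrow> 0"
    by (intro tendsto_mult_left_zero nf_size_nf_params_tendsto_zero)
qed

lemma shifted_orbit_tendsto_zero:
  assumes x: "x \<in> ball 0 (\<rho>/2)"
  shows "(\<lambda>n. comp_seq (\<lambda>j. fs (m + j)) n x) \<longlonglongrightarrow> 0"
proof (rule Lim_null_comparison)
  interpret C: near_identity_sequence \<rho> "correction_seq m" "correction_seq_deriv m" \<delta>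
    by (rule correction_near_identity)
  show "\<forall>\<^sub>F n in sequentially. norm (comp_seq (\<lambda>j. fs (m + j)) n x) \<le> nf_size (nf_params m n) * 4"
  proof (intro always_eventually allI)
    fix n
    have "norm (comp_seq (correction_seq m) n x) \<le> 1"
      using C.orbit_bound[of x n] x \<rho>_le_1 by simp
    then have "(1 + norm (comp_seq (correction_seq m) n x)) ^ 2 \<le> 2 ^ 2"
      by (intro power_mono) auto
    then have "norm (nf (nf_params m n) (comp_seq (correction_seq m) n x)) \<le> nf_size (nf_params m n) * 4"
      using nf_bound[of "nf_params m n" "comp_seq (correction_seq m) n x"]
        mult_left_mono[OF _ nf_size_nonneg[of "nf_params m n"]] by fastforce
    then show "norm (comp_seq (\<lambda>j. fs (m + j)) n x) \<le> nf_size (nf_params m n) * 4"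
      by (simp add: comp_correction_seq nf_nf_inv_params)
  qed
  show "(\<lambda>n. nf_size (nf_params m n) * 4) \<longlonglongrightarrow> 0"
    by (intro tendsto_mult_left_zero nf_size_nf_params_tendsto_zero)
qed

lemma orbit_small_imp_in_basin:
  assumes "comp_seq fs m z \<in> ball 0 (\<rho>/2)"
  shows "z \<in> nonaut_basin fs"
proof -
  have "(\<lambda>n. comp_seq fs (m + n) z) \<longlonglongrightarrow> 0"
    using shifted_orbit_tendsto_zero[OF assms, of m] by (simp only: comp_seq_add)
  then have "(\<lambda>n. comp_seq fs (n + m) z) \<longlonglongrightarrow> 0" by (simp only: add.commute)
  then show ?thesis unfolding nonaut_basin_def by (blast intro: LIMSEQ_offset)
qed

lemma basin_eventually_small:
  assumes "z \<in> nonaut_basin fs"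
  shows "\<forall>\<^sub>F m in sequentially. comp_seq fs m z \<in> ball 0 (\<rho>/2)"
proof -
  have "(\<lambda>n. norm (comp_seq fs n z)) \<longlonglongrightarrow> 0"
    using assms by (simp add: nonaut_basin_def tendsto_norm_zero)
  then have "\<forall>\<^sub>F m in sequentially. norm (comp_seq fs m z) < \<rho>/2"
    using \<rho>_pos by (intro order_tendstoD) auto
  then show ?thesis by simp
qed

lemma open_basin: "open (nonaut_basin fs)"
proof -
  have "nonaut_basin fs = (\<Union>m. comp_seq fs m -` ball 0 (\<rho>/2))"
  proof
    show "nonaut_basin fs \<subseteq> (\<Union>m. comp_seq fs m -` ball 0 (\<rho>/2))"
    proof
      fix z assume "z \<in> nonaut_basin fs"
      then obtain N where "\<forall>m\<ge>N. comp_seq fs m z \<in> ball 0 (\<rho>/2)"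
        using basin_eventually_small eventually_sequentially by meson
      then show "z \<in> (\<Union>m. comp_seq fs m -` ball 0 (\<rho>/2))" by blast
    qed
  qed (use orbit_small_imp_in_basin in blast)
  moreover have "open (comp_seq fs m -` ball 0 (\<rho>/2))" for m
    using continuous_comp_seq_fs by (intro continuous_open_vimage) auto
  ultimately show ?thesis by auto
qed

lemma nf_inv_nf_params_has_derivative:
  "\<exists>D. (nf_inv (nf_params m n) has_derivative D) (at w) \<and> cscale2_homogeneous D \<and> inj D"
proof -
  obtain a b c where X: "nf_params m n = (a, b, c)" "a \<noteq> 0" "b \<noteq> 0" by (rule nf_params_cases)
  let ?D = "\<lambda>h. ((fst h - c / b ^ 2 * (2 * snd w * snd h)) / a, snd h / b)"
  have "(nf_inv (a, b, c) has_derivative ?D) (at w)"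
    unfolding nf_inv_def using X by (auto intro!: derivative_eq_intros simp: fun_eq_iff field_simps)
  moreover have "cscale2_homogeneous ?D"
    by (simp add: cscale2_homogeneous_def cscale2_def field_simps)
  moreover have "inj ?D"
    using X by (intro injI) (auto simp: prod_eq_iff)
  ultimately show ?thesis using X by auto
qed

lemma nf_inv_nf_params_tendsto:
  "f \<longlonglongrightarrow> l \<Longrightarrow> (\<lambda>n. nf_inv (nf_params m j) (f n)) \<longlonglongrightarrow> nf_inv (nf_params m j) l"
  using nf_inv_nf_params_has_derivative has_derivative_continuous isCont_tendsto_compose by blast

definition Phi :: "complex \<times> complex \<Rightarrow> complex \<times> complex" where
  "Phi z = lim (\<lambda>n. nf_inv (nf_params 0 n) (comp_seq fs n z))"

lemma Phi_eq:
  assumes "comp_seq fs m z \<in> ball 0 (\<rho>/2)"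
  shows "Phi z = nf_inv (nf_params 0 m) (near_identity_sequence.limit_map (correction_seq m) (comp_seq fs m z))"
proof -
  interpret C: near_identity_sequence \<rho> "correction_seq m" "correction_seq_deriv m" \<delta>
    by (rule correction_near_identity)
  define x where "x = comp_seq fs m z"
  have "nf_inv (nf_params 0 (n + m)) (comp_seq fs (n + m) z) = nf_inv (nf_params 0 m) (comp_seq (correction_seq m) n x)" for n
    unfolding add.commute[of n m] nf_inv_params_add comp_seq_add comp_correction_seq x_def ..
  moreover have "(\<lambda>n. nf_inv (nf_params 0 m) (comp_seq (correction_seq m) n x)) \<longlonglongrightarrow> nf_inv (nf_params 0 m) (C.limit_map x)"
    using assms by (intro nf_inv_nf_params_tendsto C.limit_map_converges) (simp add: x_def)
  ultimately have "(\<lambda>n. nf_inv (nf_params 0 (n + m)) (comp_seq fs (n + m) z)) \<longlonglongrightarrow> nf_inv (nf_params 0 m) (C.limit_map x)"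
    by simp
  then have "(\<lambda>n. nf_inv (nf_params 0 n) (comp_seq fs n z)) \<longlonglongrightarrow> nf_inv (nf_params 0 m) (C.limit_map x)"
    by (rule LIMSEQ_offset)
  then show ?thesis unfolding Phi_def x_def by (rule limI)
qed

lemma Phi_has_derivative:
  assumes z: "z \<in> nonaut_basin fs"
  shows "\<exists>D. (Phi has_derivative D) (at z) \<and> cscale2_homogeneous D \<and> inj D"
proof -
  obtain m where x: "comp_seq fs m z \<in> ball 0 (\<rho>/2)"
    using eventually_happens'[OF sequentially_bot basin_eventually_small[OF z]] by blast
  interpret C: near_identity_sequence \<rho> "correction_seq m" "correction_seq_deriv m" \<delta>
    by (rule correction_near_identity)
  let ?x = "comp_seq fs m z"
  obtain Dc where Dc: "(comp_seq fs m has_derivative Dc) (at z)" "cscale2_homogeneous Dc" "inj Dc"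
    using comp_seq_fs_has_derivative by blast
  obtain DN where DN: "(nf_inv (nf_params 0 m) has_derivative DN) (at (C.limit_map ?x))"
      "cscale2_homogeneous DN" "inj DN"
    using nf_inv_nf_params_has_derivative by blast
  have "cscale2_homogeneous (C.limit_deriv ?x)"
    using cscale2_homogeneous_comp_seq_deriv[OF correction_seq_deriv_homogeneous] x
    by (intro cscale2_homogeneous_tendsto[OF C.comp_seq_deriv_tendsto(1)]) auto
  moreover have "inj (C.limit_deriv ?x)" using x by (rule C.inj_limit_deriv)
  moreover have "((\<lambda>y. nf_inv (nf_params 0 m) (C.limit_map (comp_seq fs m y)))
      has_derivative DN \<circ> C.limit_deriv ?x \<circ> Dc) (at z)"
    using has_derivative_compose[OF has_derivative_compose[OF Dc(1) C.limit_map_converges(2)[OF x]] DN(1)]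
    by (simp add: o_def)
  then have "(Phi has_derivative DN \<circ> C.limit_deriv ?x \<circ> Dc) (at z)"
  proof (rule has_derivative_transform_within_open)
    show "open (comp_seq fs m -` ball 0 (\<rho>/2))"
      using continuous_comp_seq_fs by (intro continuous_open_vimage) auto
  qed (use x Phi_eq in auto)
  ultimately show ?thesis
    using Dc DN by (metis cscale2_homogeneous_comp inj_compose)
qed

lemma inj_on_Phi: "inj_on Phi (nonaut_basin fs)"
proof (rule inj_onI)
  fix z z' assume z: "z \<in> nonaut_basin fs" and z': "z' \<in> nonaut_basin fs" and eq: "Phi z = Phi z'"
  obtain m where x: "comp_seq fs m z \<in> ball 0 (\<rho>/2)" and x': "comp_seq fs m z' \<in> ball 0 (\<rho>/2)"
    using eventually_happens'[OF sequentially_bot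
        eventually_conj[OF basin_eventually_small[OF z] basin_eventually_small[OF z']]] by blast
  interpret C: near_identity_sequence \<rho> "correction_seq m" "correction_seq_deriv m" \<delta>
    by (rule correction_near_identity)
  have "C.limit_map (comp_seq fs m z) = C.limit_map (comp_seq fs m z')"
    using eq Phi_eq[OF x] Phi_eq[OF x'] by (metis nf_nf_inv_params)
  then have "comp_seq fs m z = comp_seq fs m z'"
    using C.inj_on_limit_map x x' by (simp add: inj_on_eq_iff)
  then show "z = z'" using bij_comp_seq_fs[of m] by (simp add: bij_def inj_eq)
qed

lemma surj_Phi: "Phi ` nonaut_basin fs = UNIV"
proof -
  have "w \<in> Phi ` nonaut_basin fs" for w
  proof -
    have "(\<lambda>m. norm (nf (nf_params 0 m) w)) \<longlonglongrightarrow> 0"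
      using nf_nf_params_tendsto_zero by (rule tendsto_norm_zero)
    then obtain m where m: "norm (nf (nf_params 0 m) w) < \<rho>/8"
      using \<rho>_pos eventually_happens'[OF sequentially_bot order_tendstoD(2)] by (metis divide_pos_pos zero_less_numeral)
    interpret C: near_identity_sequence \<rho> "correction_seq m" "correction_seq_deriv m" \<delta>
      by (rule correction_near_identity)
    obtain x where x: "x \<in> ball 0 (\<rho>/2)" "C.limit_map x = nf (nf_params 0 m) w"
      using C.limit_map_surj[OF m] by blast
    obtain z where z: "comp_seq fs m z = x" using bij_comp_seq_fs[of m] by (metis bij_pointE)
    have "Phi z = w" using Phi_eq[of m z] x z by (simp add: nf_inv_nf_params)
    moreover have "z \<in> nonaut_basin fs" using orbit_small_imp_in_basin[of m z] x z by simp
    ultimately show ?thesis by blast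
  qed
  then show ?thesis by blast
qed

end

theorem proposition1p2:
  fixes k :: nat and \<alpha> \<beta> :: complex
    and F G :: "complex \<times> complex \<Rightarrow> complex \<times> complex"
    and fs :: "nat \<Rightarrow> (complex \<times> complex \<Rightarrow> complex \<times> complex)"
  assumes "k \<ge> 2"
    and "cmod \<alpha> ^ k < cmod \<beta>" and "cmod \<beta> \<le> cmod \<alpha> ^ (k - 1)"
    and "\<And>z1 z2. F (z1, z2) = (\<alpha> * z1 + z2 ^ 2, \<beta> * z2)"
    and "\<And>z1 z2. G (z1, z2) = (\<beta> * z1, \<alpha> * z2 + z1 ^ k)"
    and "\<And>n. n \<ge> 1 \<Longrightarrow> fs n = F \<or> fs n = G"
  shows "biholomorphic_to_C2 (nonaut_basin fs)"
proof -
  interpret basin_setting k \<alpha> \<beta> F G fs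
    using assms by unfold_locales auto
  have "bij_betw Phi (nonaut_basin fs) UNIV"
    using inj_on_Phi surj_Phi by (simp add: bij_betw_def)
  then show ?thesis
    using biholomorphic_to_C2I[OF open_basin _ Phi_has_derivative] by blast
qed

end
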